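(* Let $w=(w_n)$ be any bounded sequence of positive real numbers. The unilateral weighted backward shift $B_w:\ell^\infty(\mathbb N)\to\ell^\infty(\mathbb N)$, $(B_wx)_n=w_n x_{n+1}$ ($n\in\mathbb N$), is not recurrent; and for a bounded sequence of positive reals $w=(w_n)_{n\in\mathbb Z}$, the bilateral weighted backward shift $B_w:\ell^\infty(\mathbb Z)\to\ell^\infty(\mathbb Z)$, $(B_wx)_n=w_n x_{n+1}$ ($n\in\mathbb Z$), is not recurrent.
   Context: $\ell^\infty(\mathbb N)$, $\ell^\infty(\mathbb Z)$ are the Banach spaces of bounded complex sequences with the supremum norm. An operator $T$ on a Banach space $X$ is recurrent if for every non-empty open $U\subset X$ there is a positive integer $k$ with $U\cap T^{-k}(U)\neq\emptyset$. *)

theory Defs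
  imports "HOL-Analysis.Analysis"
begin

(* ell^infinity(N) is modelled as nat =>C complex and ell^infinity(Z) as int =>C complex
   (bounded continuous functions on a discrete space, sup norm). *)

definition recurrent :: "('a::topological_space \<Rightarrow> 'a) \<Rightarrow> bool" where
  "recurrent T \<longleftrightarrow>
     (\<forall>U. open U \<and> U \<noteq> {} \<longrightarrow> (\<exists>k::nat. k > 0 \<and> U \<inter> (T ^^ k) -` U \<noteq> {}))"

end

theory Submission
  imports Defs
begin

text \<open>Let \<open>f\<close> be \<open>1\<close> at a point \<open>p\<close> and \<open>-1\<close> elsewhere. If \<open>y\<close> and \<open>B\<^sup>k y\<close> are both
  within \<open>1/2\<close> of \<open>f\<close>, then \<open>(B\<^sup>k y) p\<close> has positive real part, but it is a positive multiple
  of \<open>y\<close> at the point \<open>k\<close> steps to the right of \<open>p\<close>, where \<open>y\<close> has negative real part.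
  So the ball of radius \<open>1/2\<close> around \<open>f\<close> never returns to itself.\<close>

lemma weighted_shift_funpow:
  fixes B :: "('a::topological_space \<Rightarrow>\<^sub>C complex) \<Rightarrow> ('a \<Rightarrow>\<^sub>C complex)"
  assumes B: "\<And>x n. apply_bcontfun (B x) n = complex_of_real (w n) * apply_bcontfun x (s n)"
  shows "apply_bcontfun ((B ^^ k) x) n =
           complex_of_real (\<Prod>i<k. w ((s ^^ i) n)) * apply_bcontfun x ((s ^^ k) n)"
proof (induction k arbitrary: x)
  case (Suc k)
  have "(B ^^ Suc k) x = (B ^^ k) (B x)"
    by (simp only: funpow_Suc_right comp_apply)
  then show ?case
    by (simp add: Suc B)
qed simp

lemma Re_bcontfun_close:
  fixes f g :: "'a::topological_space \<Rightarrow>\<^sub>C complex"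
  assumes "dist f g < e"
  shows "\<bar>Re (apply_bcontfun f n) - Re (apply_bcontfun g n)\<bar> < e"
proof -
  have "\<bar>Re (apply_bcontfun f n - apply_bcontfun g n)\<bar> \<le> dist f g"
    using abs_Re_le_cmod dist_bounded[of f n g] by (metis dist_norm order.trans)
  with assms show ?thesis by simp
qed

lemma weighted_shift_not_recurrent:
  fixes B :: "('a::discrete_topology \<Rightarrow>\<^sub>C complex) \<Rightarrow> ('a \<Rightarrow>\<^sub>C complex)"
  assumes w_pos: "\<And>n. w n > 0"
    and B: "\<And>x n. apply_bcontfun (B x) n = complex_of_real (w n) * apply_bcontfun x (s n)"
    and no_return: "\<And>k. k > 0 \<Longrightarrow> (s ^^ k) p \<noteq> p"
  shows "\<not> recurrent B"
proof
  define f where "f n = (if n = p then 1 else - 1 :: complex)" for n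
  have "bounded (range f)"
    by (rule bounded_subset[of "{1, -1}"]) (auto simp: f_def)
  then have "f \<in> bcontfun"
    by (simp add: bcontfun_def continuous_on_discrete)
  then have f_apply: "apply_bcontfun (Bcontfun f) = f"
    by (rule Bcontfun_inverse)
  assume "recurrent B"
  then obtain k :: nat where "k > 0"
    and "ball (Bcontfun f) (1/2) \<inter> (B ^^ k) -` ball (Bcontfun f) (1/2) \<noteq> {}"
    unfolding recurrent_def by (metis centre_in_ball open_ball empty_iff half_gt_zero zero_less_one)
  then obtain y where y: "dist (Bcontfun f) y < 1/2"
    and Bky: "dist (Bcontfun f) ((B ^^ k) y) < 1/2"
    by auto
  let ?q = "(s ^^ k) p"
  let ?c = "\<Prod>i<k. w ((s ^^ i) p)"
  have "Re (apply_bcontfun y ?q) < 0"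
    using Re_bcontfun_close[OF y, of ?q] no_return[OF \<open>k > 0\<close>]
    by (simp add: f_apply f_def abs_real_def split: if_splits)
  moreover have "?c > 0"
    using w_pos by (simp add: prod_pos)
  moreover have "Re (apply_bcontfun ((B ^^ k) y) p) > 0"
    using Re_bcontfun_close[OF Bky, of p]
    by (simp add: f_apply f_def abs_real_def split: if_splits)
  moreover have "Re (apply_bcontfun ((B ^^ k) y) p) = ?c * Re (apply_bcontfun y ?q)"
    by (simp add: weighted_shift_funpow[OF B] del: of_real_prod)
  ultimately show False
    by (metis mult_pos_neg not_less_iff_gr_or_eq)
qed

theorem theorem5p1:
  shows "(\<forall>(w :: nat \<Rightarrow> real) (B :: (nat \<Rightarrow>\<^sub>C complex) \<Rightarrow> (nat \<Rightarrow>\<^sub>C complex)).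
            (\<forall>n. w n > 0) \<and> bounded (range w) \<and>
            (\<forall>x n. apply_bcontfun (B x) n = complex_of_real (w n) * apply_bcontfun x (Suc n))
            \<longrightarrow> \<not> recurrent B)
       \<and> (\<forall>(w :: int \<Rightarrow> real) (B :: (int \<Rightarrow>\<^sub>C complex) \<Rightarrow> (int \<Rightarrow>\<^sub>C complex)).
            (\<forall>n. w n > 0) \<and> bounded (range w) \<and>
            (\<forall>x n. apply_bcontfun (B x) n = complex_of_real (w n) * apply_bcontfun x (n + 1))
            \<longrightarrow> \<not> recurrent B)"
proof (intro conjI allI impI)
  have "(Suc ^^ k) 0 = k" for k
    by (induction k) auto
  then show "\<not> recurrent B"
    if "(\<forall>n. w n > 0) \<and> bounded (range w) \<and>
          (\<forall>x n. apply_bcontfun (B x) n = complex_of_real (w n) * apply_bcontfun x (Suc n))"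
    for w :: "nat \<Rightarrow> real" and B :: "(nat \<Rightarrow>\<^sub>C complex) \<Rightarrow> (nat \<Rightarrow>\<^sub>C complex)"
    using that by (intro weighted_shift_not_recurrent[of w B Suc 0]) auto
next
  have "((\<lambda>n. n + 1) ^^ k) 0 = int k" for k
    by (induction k) auto
  then show "\<not> recurrent B"
    if "(\<forall>n. w n > 0) \<and> bounded (range w) \<and>
          (\<forall>x n. apply_bcontfun (B x) n = complex_of_real (w n) * apply_bcontfun x (n + 1))"
    for w :: "int \<Rightarrow> real" and B :: "(int \<Rightarrow>\<^sub>C complex) \<Rightarrow> (int \<Rightarrow>\<^sub>C complex)"
    using that by (intro weighted_shift_not_recurrent[of w B "\<lambda>n. n + 1" 0]) auto
qed

end
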